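(* Let $A\subseteq\mathbb{R}^m$ and $B\subseteq\mathbb{R}^n$ be set-germs at $0$ with $0\in\overline{A}$ and $0\in\overline{B}$. Then $$D(A\times B)\subseteq\{(ta,\sqrt{1-t^2}\,b):\ a\in D(A),\ b\in D(B),\ t\in[0,1]\}.$$ Moreover, if both $A$ and $B$ satisfy condition (SSP), then equality holds.
   Context: For a set-germ $A\subset\mathbb{R}^k$ at $0$ with $0\in\overline A$, $D(A)=\{a\in S^{k-1}:\exists\, x_i\in A\setminus\{0\},\ x_i\to0,\ x_i/\|x_i\|\to a\}$ (for $A\times B$ this is computed in $\mathbb{R}^{m+n}$ at $(0,0)$). For sequences, $\|u_m\|\ll\|v_m\|,\|w_m\|$ means $\|u_m\|/\|v_m\|\to0$ and $\|u_m\|/\|w_m\|\to0$. $A$ satisfies condition (SSP) if for every sequence $a_m\in\mathbb{R}^k$ tending to $0$ with $\lim a_m/\|a_m\|\in D(A)$ there is a sequence $b_m\in A$ with $\|a_m-b_m\|\ll\|a_m\|,\|b_m\|$. *)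

theory Defs
  imports "HOL-Analysis.Analysis"
begin

definition tangent_dirs :: "'a::real_normed_vector set \<Rightarrow> 'a set" where
  "tangent_dirs A = {d. norm d = 1 \<and>
     (\<exists>x::nat \<Rightarrow> 'a. (\<forall>i. x i \<in> A - {0}) \<and> x \<longlonglongrightarrow> 0 \<and>
        (\<lambda>i. x i /\<^sub>R norm (x i)) \<longlonglongrightarrow> d)}"

definition SSP :: "'a::real_normed_vector set \<Rightarrow> bool" where
  "SSP A \<longleftrightarrow> (\<forall>a::nat \<Rightarrow> 'a. a \<longlonglongrightarrow> 0 \<and>
      (\<exists>d\<in>tangent_dirs A. (\<lambda>m. a m /\<^sub>R norm (a m)) \<longlonglongrightarrow> d) \<longrightarrow>
      (\<exists>b::nat \<Rightarrow> 'a. (\<forall>m. b m \<in> A) \<and>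
         (\<lambda>m. norm (a m - b m) / norm (a m)) \<longlonglongrightarrow> 0 \<and>
         (\<lambda>m. norm (a m - b m) / norm (b m)) \<longlonglongrightarrow> 0))"

end

theory Submission
  imports Defs
begin

text \<open>
  Rescale a sequence \<open>z\<^sub>i \<in> A \<times> B\<close> realising a direction by \<open>r\<^sub>i = \<parallel>z\<^sub>i\<parallel>\<close>: the two components
  converge to \<open>u\<close>, \<open>v\<close> with \<open>\<parallel>u\<parallel>\<^sup>2 + \<parallel>v\<parallel>\<^sup>2 = 1\<close>, and each nonzero component normalises to a
  direction of its factor. Conversely, to realise \<open>(t a, s b)\<close> with \<open>s > 0\<close>, a sequence of \<open>B\<close>
  with direction \<open>b\<close> fixes the scale \<open>r\<^sub>i\<close>, and (SSP) for \<open>A\<close> supplies points of \<open>A\<close> within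
  \<open>o(r\<^sub>i)\<close> of \<open>t r\<^sub>i a\<close>; components with coefficient \<open>0\<close> are filled in by points of the
  factor tending to \<open>0\<close> faster than \<open>r\<^sub>i\<close>.
\<close>

definition spherical_join :: "'a::real_normed_vector set \<Rightarrow> 'b::real_normed_vector set \<Rightarrow> ('a \<times> 'b) set" where
  "spherical_join P Q =
     {(t *\<^sub>R a, sqrt (1 - t\<^sup>2) *\<^sub>R b) | a b t. a \<in> P \<and> b \<in> Q \<and> t \<in> {0..1}}"

lemma tangent_dirs_norm: "d \<in> tangent_dirs A \<Longrightarrow> norm d = 1"
  by (simp add: tangent_dirs_def)

lemma tangent_dirsI_eventually:
  assumes "norm d = 1" and "\<forall>\<^sub>F i in sequentially. x i \<in> A - {0}"
    and "x \<longlonglongrightarrow> 0" and "(\<lambda>i. x i /\<^sub>R norm (x i)) \<longlonglongrightarrow> d"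
  shows "d \<in> tangent_dirs A"
proof -
  obtain N where N: "\<And>i. i \<ge> N \<Longrightarrow> x i \<in> A - {0}"
    using assms(2) unfolding eventually_sequentially by blast
  show ?thesis unfolding tangent_dirs_def
    using assms(1) N LIMSEQ_ignore_initial_segment[OF assms(3), of N]
      LIMSEQ_ignore_initial_segment[OF assms(4), of N]
    by (intro CollectI conjI exI[of _ "\<lambda>i. x (i + N)"]) auto
qed

lemma rescaled_limit_in_tangent_dirs:
  fixes x :: "nat \<Rightarrow> 'a::real_normed_vector"
  assumes r_pos: "\<And>i. r i > 0" and r_to_0: "r \<longlonglongrightarrow> 0"
    and lim: "(\<lambda>i. x i /\<^sub>R r i) \<longlonglongrightarrow> c" and "c \<noteq> 0"
    and in_A: "\<forall>\<^sub>F i in sequentially. x i \<in> A"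
  shows "sgn c \<in> tangent_dirs A"
proof (rule tangent_dirsI_eventually)
  have "x i = r i *\<^sub>R (x i /\<^sub>R r i)" for i
    using r_pos[of i] by simp
  then show "x \<longlonglongrightarrow> 0"
    using tendsto_scaleR[OF r_to_0 lim] by simp
  have "\<forall>\<^sub>F i in sequentially. x i /\<^sub>R r i \<noteq> 0"
    using tendsto_imp_eventually_ne[OF lim \<open>c \<noteq> 0\<close>] .
  then show "\<forall>\<^sub>F i in sequentially. x i \<in> A - {0}"
    using in_A by eventually_elim auto
  have "sgn (x i /\<^sub>R r i) = x i /\<^sub>R norm (x i)" for i
    using r_pos[of i] by (simp add: sgn_scaleR sgn_div_norm)
  then show "(\<lambda>i. x i /\<^sub>R norm (x i)) \<longlonglongrightarrow> sgn c"
    using tendsto_sgn[OF lim \<open>c \<noteq> 0\<close>] by simp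
  show "norm (sgn c) = 1"
    using \<open>c \<noteq> 0\<close> by (simp add: norm_sgn)
qed

lemma tangent_dirs_nonempty:
  fixes A :: "'a::euclidean_space set"
  assumes "0 islimpt A"
  shows "tangent_dirs A \<noteq> {}"
proof -
  obtain x where x: "\<And>i. x i \<in> A - {0}" "x \<longlonglongrightarrow> 0"
    using assms unfolding islimpt_sequential by blast
  have "seq_compact (sphere (0::'a) 1)"
    by (simp add: compact_imp_seq_compact)
  moreover have "\<forall>i. x i /\<^sub>R norm (x i) \<in> sphere 0 1"
    using x(1) by simp
  ultimately obtain d \<sigma> where d: "d \<in> sphere 0 1" "strict_mono \<sigma>"
     "((\<lambda>i. x i /\<^sub>R norm (x i)) \<circ> \<sigma>) \<longlonglongrightarrow> d"
    by (rule seq_compactE)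
  have "d \<in> tangent_dirs A" unfolding tangent_dirs_def
  proof (intro CollectI conjI exI[of _ "x \<circ> \<sigma>"] allI)
    show "norm d = 1" using d(1) by simp
    show "(x \<circ> \<sigma>) i \<in> A - {0}" for i using x(1) by simp
    show "(x \<circ> \<sigma>) \<longlonglongrightarrow> 0" using LIMSEQ_subseq_LIMSEQ[OF x(2) d(2)] .
    show "(\<lambda>i. (x \<circ> \<sigma>) i /\<^sub>R norm ((x \<circ> \<sigma>) i)) \<longlonglongrightarrow> d"
      using d(3) by (simp add: o_def)
  qed
  then show ?thesis by blast
qed

lemma rescaled_limit_direction:
  fixes x :: "nat \<Rightarrow> 'a::euclidean_space"
  assumes "0 islimpt A" and "\<And>i. r i > 0" and "r \<longlonglongrightarrow> 0"
    and "(\<lambda>i. x i /\<^sub>R r i) \<longlonglongrightarrow> c" and "\<forall>\<^sub>F i in sequentially. x i \<in> A"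
  obtains a where "a \<in> tangent_dirs A" and "c = norm c *\<^sub>R a"
proof (cases "c = 0")
  case True
  then show ?thesis
    using that tangent_dirs_nonempty[OF assms(1)] by auto
next
  case False
  then show ?thesis
    using that[of "sgn c"] rescaled_limit_in_tangent_dirs[OF assms(2-4) False assms(5)]
    by (simp add: sgn_div_norm)
qed

lemma islimpt_obtain_rescaled_null:
  fixes B :: "'a::real_normed_vector set"
  assumes "0 islimpt B" and r_pos: "\<And>i. r i > 0"
  obtains y where "\<And>i. y i \<in> B" and "(\<lambda>i. y i /\<^sub>R r i) \<longlonglongrightarrow> 0"
proof -
  have "\<forall>i. \<exists>z\<in>B. z \<noteq> 0 \<and> dist z 0 < r i / real (Suc i)"
    using assms unfolding islimpt_approachable by simp
  then obtain y where y_in: "\<And>i. y i \<in> B"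
    and y_small: "\<And>i. dist (y i) 0 < r i / real (Suc i)"
    by metis
  have "(\<lambda>i. y i /\<^sub>R r i) \<longlonglongrightarrow> 0"
  proof (rule Lim_null_comparison)
    show "\<forall>\<^sub>F i in sequentially. norm (y i /\<^sub>R r i) \<le> inverse (real (Suc i))"
    proof (intro always_eventually allI)
      fix i
      show "norm (y i /\<^sub>R r i) \<le> inverse (real (Suc i))"
        using y_small[of i] r_pos[of i] by (simp add: field_simps)
    qed
  qed (rule LIMSEQ_inverse_real_of_nat)
  with y_in that show ?thesis by blast
qed

lemma tangent_dirs_obtain_rescaled:
  assumes "b \<in> tangent_dirs B" and "s > 0"
  obtains r y where "\<And>i. r i > 0" and "r \<longlonglongrightarrow> 0" and "\<And>i. y i \<in> B"
    and "(\<lambda>i. y i /\<^sub>R r i) \<longlonglongrightarrow> s *\<^sub>R b"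
proof -
  obtain y where y: "\<And>i. y i \<in> B - {0}" "y \<longlonglongrightarrow> 0"
      "(\<lambda>i. y i /\<^sub>R norm (y i)) \<longlonglongrightarrow> b"
    using assms(1) unfolding tangent_dirs_def by blast
  define r where "r i = norm (y i) / s" for i
  have "\<And>i. r i > 0"
    using y(1) \<open>s > 0\<close> by (simp add: r_def)
  moreover have "r \<longlonglongrightarrow> 0"
    unfolding r_def using tendsto_divide[OF tendsto_norm[OF y(2)] tendsto_const[of s]] \<open>s > 0\<close> by simp
  moreover have "(\<lambda>i. y i /\<^sub>R r i) \<longlonglongrightarrow> s *\<^sub>R b"
    using tendsto_scaleR[OF tendsto_const[of s] y(3)] \<open>s > 0\<close> by (simp add: r_def divide_inverse mult.commute)
  ultimately show ?thesis
    using that y(1) by blast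
qed

lemma SSP_obtain_rescaled:
  assumes "SSP A" and a: "a \<in> tangent_dirs A" and r_pos: "\<And>i. r i > 0"
    and "r \<longlonglongrightarrow> 0" and "t > 0"
  obtains x where "\<And>i. x i \<in> A" and "(\<lambda>i. x i /\<^sub>R r i) \<longlonglongrightarrow> t *\<^sub>R a"
proof -
  define p where "p i = (t * r i) *\<^sub>R a" for i
  have norm_p: "norm (p i) = t * r i" for i
    using tangent_dirs_norm[OF a] r_pos[of i] \<open>t > 0\<close> by (simp add: p_def)
  have "p \<longlonglongrightarrow> 0"
    unfolding p_def using tendsto_scaleR[OF tendsto_mult[OF tendsto_const \<open>r \<longlonglongrightarrow> 0\<close>] tendsto_const]
    by (metis mult_zero_right scaleR_zero_left)
  moreover have "(\<lambda>i. p i /\<^sub>R norm (p i)) \<longlonglongrightarrow> a"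
  proof -
    have "p i /\<^sub>R norm (p i) = a" for i
      using norm_p[of i] r_pos[of i] \<open>t > 0\<close> by (simp add: p_def field_simps)
    then show ?thesis by simp
  qed
  ultimately obtain x where x_in: "\<And>i. x i \<in> A"
    and close: "(\<lambda>i. norm (p i - x i) / norm (p i)) \<longlonglongrightarrow> 0"
    using \<open>SSP A\<close> a unfolding SSP_def by blast
  have "norm (x i /\<^sub>R r i - t *\<^sub>R a) = t * (norm (p i - x i) / norm (p i))" for i
  proof -
    have "x i /\<^sub>R r i - t *\<^sub>R a = (x i - p i) /\<^sub>R r i"
      using r_pos[of i] by (simp add: p_def algebra_simps)
    then have "norm (x i /\<^sub>R r i - t *\<^sub>R a) = norm (p i - x i) / r i"
      using r_pos[of i] by (simp add: norm_minus_commute divide_inverse_commute less_imp_le)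
    also have "\<dots> = t * (norm (p i - x i) / norm (p i))"
      using norm_p[of i] r_pos[of i] \<open>t > 0\<close> by (simp add: field_simps)
    finally show ?thesis .
  qed
  then have "(\<lambda>i. norm (x i /\<^sub>R r i - t *\<^sub>R a)) \<longlonglongrightarrow> 0"
    using tendsto_mult_right_zero[OF close, of t] by simp
  then have "(\<lambda>i. x i /\<^sub>R r i) \<longlonglongrightarrow> t *\<^sub>R a"
    unfolding tendsto_norm_zero_iff LIM_zero_iff .
  with x_in that show ?thesis by blast
qed

lemma rescaled_limits_in_tangent_dirs_Times:
  assumes "\<And>i. r i > 0" and "r \<longlonglongrightarrow> 0"
    and "(\<lambda>i. x i /\<^sub>R r i) \<longlonglongrightarrow> c" and "(\<lambda>i. y i /\<^sub>R r i) \<longlonglongrightarrow> d"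
    and "norm (c, d) = 1" and "\<And>i. x i \<in> A" and "\<And>i. y i \<in> B"
  shows "(c, d) \<in> tangent_dirs (A \<times> B)"
proof -
  have "(\<lambda>i. (x i, y i) /\<^sub>R r i) \<longlonglongrightarrow> (c, d)"
    using tendsto_Pair[OF assms(3,4)] by simp
  moreover have "(c, d) \<noteq> 0"
    using assms(5) by auto
  moreover have "\<forall>\<^sub>F i in sequentially. (x i, y i) \<in> A \<times> B"
    using assms(6,7) by simp
  ultimately have "sgn (c, d) \<in> tangent_dirs (A \<times> B)"
    by (rule rescaled_limit_in_tangent_dirs[OF assms(1,2)])
  then show ?thesis
    using assms(5) by (simp add: sgn_div_norm)
qed

lemma tangent_dirs_Times_subset:
  fixes A :: "'a::euclidean_space set" and B :: "'b::euclidean_space set"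
  assumes "0 islimpt A" and "0 islimpt B"
  shows "tangent_dirs (A \<times> B) \<subseteq> spherical_join (tangent_dirs A) (tangent_dirs B)"
proof
  fix p assume "p \<in> tangent_dirs (A \<times> B)"
  then obtain z where z: "\<And>i. z i \<in> A \<times> B - {0}" "z \<longlonglongrightarrow> 0"
      "(\<lambda>i. z i /\<^sub>R norm (z i)) \<longlonglongrightarrow> p" and "norm p = 1"
    unfolding tangent_dirs_def by blast
  obtain u v where p: "p = (u, v)" by fastforce
  define r where "r i = norm (z i)" for i
  have r_pos: "\<And>i. r i > 0"
    using z(1) by (simp add: r_def)
  have r_to_0: "r \<longlonglongrightarrow> 0"
    unfolding r_def using tendsto_norm[OF z(2)] by simp
  have lim: "(\<lambda>i. z i /\<^sub>R r i) \<longlonglongrightarrow> (u, v)"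
    using z(3) by (simp add: r_def p)
  obtain a where a: "a \<in> tangent_dirs A" "u = norm u *\<^sub>R a"
    using tendsto_fst[OF lim] z(1)
    by (auto intro: rescaled_limit_direction[OF assms(1) r_pos r_to_0] simp: mem_Times_iff)
  obtain b where b: "b \<in> tangent_dirs B" "v = norm v *\<^sub>R b"
    using tendsto_snd[OF lim] z(1)
    by (auto intro: rescaled_limit_direction[OF assms(2) r_pos r_to_0] simp: mem_Times_iff)
  have sum_squares: "(norm u)\<^sup>2 + (norm v)\<^sup>2 = 1"
    using \<open>norm p = 1\<close> unfolding p norm_Pair by (metis real_sqrt_eq_1_iff)
  then have "norm u \<le> 1"
    by (metis abs_norm_cancel abs_square_le_1 le_add_same_cancel1 zero_le_power2)
  moreover have "norm v = sqrt (1 - (norm u)\<^sup>2)"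
    using sum_squares by (metis add_diff_cancel_left' norm_ge_zero real_sqrt_abs real_sqrt_unique)
  ultimately show "p \<in> spherical_join (tangent_dirs A) (tangent_dirs B)"
    unfolding spherical_join_def p using a b by fastforce
qed

text \<open>Only \<open>A\<close> needs (SSP): the scale is taken from a sequence of \<open>B\<close> realising \<open>b\<close>.\<close>

lemma spherical_join_subset_tangent_dirs_Times:
  fixes A :: "'a::euclidean_space set" and B :: "'b::euclidean_space set"
  assumes "0 islimpt A" and "0 islimpt B" and "SSP A"
  shows "spherical_join (tangent_dirs A) (tangent_dirs B) \<subseteq> tangent_dirs (A \<times> B)"
proof
  fix p assume "p \<in> spherical_join (tangent_dirs A) (tangent_dirs B)"
  then obtain a b t where p: "p = (t *\<^sub>R a, sqrt (1 - t\<^sup>2) *\<^sub>R b)"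
    and a: "a \<in> tangent_dirs A" and b: "b \<in> tangent_dirs B" and t: "0 \<le> t" "t \<le> 1"
    unfolding spherical_join_def by auto
  define s where "s = sqrt (1 - t\<^sup>2)"
  have norm_1: "norm (t *\<^sub>R a, s *\<^sub>R b) = 1"
    using t tangent_dirs_norm[OF a] tangent_dirs_norm[OF b]
    by (simp add: s_def norm_Pair abs_square_le_1)
  show "p \<in> tangent_dirs (A \<times> B)"
    unfolding p s_def[symmetric]
  proof (cases "t = 1")
    case True
    obtain r x where r: "\<And>i. r i > 0" "r \<longlonglongrightarrow> 0" and x: "\<And>i. x i \<in> A"
      "(\<lambda>i. x i /\<^sub>R r i) \<longlonglongrightarrow> t *\<^sub>R a"
      using tangent_dirs_obtain_rescaled[OF a, of t] True by auto
    obtain y where y: "\<And>i. y i \<in> B" "(\<lambda>i. y i /\<^sub>R r i) \<longlonglongrightarrow> 0"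
      using islimpt_obtain_rescaled_null[OF assms(2), of r] r(1) by blast
    have "s = 0"
      using True by (simp add: s_def)
    with y(2) have "(\<lambda>i. y i /\<^sub>R r i) \<longlonglongrightarrow> s *\<^sub>R b"
      by simp
    from rescaled_limits_in_tangent_dirs_Times[OF r x(2) this norm_1 x(1) y(1)]
    show "(t *\<^sub>R a, s *\<^sub>R b) \<in> tangent_dirs (A \<times> B)" .
  next
    case False
    then have "s > 0"
      using t by (simp add: s_def abs_square_less_1)
    obtain r y where r: "\<And>i. r i > 0" "r \<longlonglongrightarrow> 0" and y: "\<And>i. y i \<in> B"
      "(\<lambda>i. y i /\<^sub>R r i) \<longlonglongrightarrow> s *\<^sub>R b"
      using tangent_dirs_obtain_rescaled[OF b \<open>s > 0\<close>] by blast
    obtain x where x: "\<And>i. x i \<in> A" "(\<lambda>i. x i /\<^sub>R r i) \<longlonglongrightarrow> t *\<^sub>R a"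
    proof (cases "t = 0")
      case True
      then show ?thesis
        using islimpt_obtain_rescaled_null[OF assms(1), of r] r(1) that by auto
    next
      case False
      with t have "t > 0"
        by simp
      from SSP_obtain_rescaled[OF \<open>SSP A\<close> a r this] that show ?thesis
        by blast
    qed
    from rescaled_limits_in_tangent_dirs_Times[OF r x(2) y(2) norm_1 x(1) y(1)]
    show "(t *\<^sub>R a, s *\<^sub>R b) \<in> tangent_dirs (A \<times> B)" .
  qed
qed

theorem proposition2p34:
  fixes A :: "'a::euclidean_space set" and B :: "'b::euclidean_space set"
  assumes "0 islimpt A" and "0 islimpt B"
  shows "tangent_dirs (A \<times> B) \<subseteq>
           {(t *\<^sub>R a, sqrt (1 - t\<^sup>2) *\<^sub>R b) | a b t. a \<in> tangent_dirs A \<and> b \<in> tangent_dirs B \<and> t \<in> {0..1}}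
       \<and> (SSP A \<and> SSP B \<longrightarrow>
           tangent_dirs (A \<times> B) =
           {(t *\<^sub>R a, sqrt (1 - t\<^sup>2) *\<^sub>R b) | a b t. a \<in> tangent_dirs A \<and> b \<in> tangent_dirs B \<and> t \<in> {0..1}})"
  using tangent_dirs_Times_subset[OF assms] spherical_join_subset_tangent_dirs_Times[OF assms]
  unfolding spherical_join_def by blast

end
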